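(* Let $r\ge1$, $k_1,\dots,k_r\ge1$, $k=\sum k_\alpha$, and let $\Pi\in\mathrm{Part}_2(2k)$ satisfy $\#(\Pi_0\vee\Pi_1\vee\Pi)=1$ and $\#(\Pi_1\vee\Pi)=1$. Then, as $p\to\infty$, $$\sum_{\substack{\mathbf j:\ (p,2k)\text{-word},\\ \mathbf j\ \Pi_1\text{-measurable}}}(1-B(\mathbf j))C_\Pi(\mathbf j)=o(p).$$
   Context: Assumption A: $p$ positive integer, $b=b(p)>0$, $n=n(p)$ positive integer; as $p\to\infty$, $b\to\infty$, $n\to\infty$, $b/n\to0$, $b\le p$. $\{Z_j\}_{j\in\mathbb Z}$ is a stationary real sequence with all moments finite, $\mathbf EZ_0=0$, and $\sum_{j_1,\dots,j_r\in\mathbb Z}|\mathbf C(Z_0,Z_{j_1},\dots,Z_{j_r})|<\infty$ for all $r\ge1$, where $\mathbf C$ is the joint cumulant $\mathbf C(X_1,\dots,X_k)=i^{-k}\frac{\partial^k}{\partial t_1\cdots\partial t_k}\log\mathbf E\exp(\sum_j it_jX_j)|_{t=0}$. $\mathrm{Part}(m)$ is the set of set partitions of $\{1,\dots,m\}$; $\mathrm{Part}_2(m)$ those with all parts of size $\ge2$; $\Pi\vee\Sigma$ is the finest partition refined by both. With $K_0=0$, $K_\alpha=2\sum_{\beta\le\alpha}k_\beta$: $\Pi_0=\{\{2i-1,2i\}:i=1,\dots,k\}$, $\Pi_1=\bigcup_{\alpha=1}^r\big(\{\{K_{\alpha-1}+2\nu,K_{\alpha-1}+2\nu+1\}:1\le\nu\le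 k_\alpha-1\}\cup\{\{K_\alpha,K_{\alpha-1}+1\}\}\big)$. A $(p,2k)$-word is a function $\mathbf j:\{1,\dots,2k\}\to\{1,\dots,p\}$, $\Pi$-measurable if constant on parts of $\Pi$. $B(i,j)=1$ if $|i-j|\le b$ else $0$; $B(\mathbf j)=\prod_{\alpha=1}^kB(\mathbf j(2\alpha-1),\mathbf j(2\alpha))$; $C_\Pi(\mathbf j)=\prod_{A\in\Pi}\mathbf C(\{Z_{\mathbf j(i)}\}_{i\in A})$. *)

theory Defs
  imports "HOL-Probability.Probability" "HOL-Library.Landau_Symbols" "HOL-Library.Disjoint_Sets"
begin

definition char_fun :: "'a measure \<Rightarrow> ('a \<Rightarrow> real) list \<Rightarrow> (nat \<Rightarrow> real) \<Rightarrow> complex" where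
  "char_fun M Xs t = integral\<^sup>L M (\<lambda>x. cis (\<Sum>i<length Xs. t i * (Xs ! i) x))"

fun mpd :: "((nat \<Rightarrow> real) \<Rightarrow> complex) \<Rightarrow> nat list \<Rightarrow> (nat \<Rightarrow> real) \<Rightarrow> complex" where
  "mpd f [] t = f t"
| "mpd f (j # js) t = vector_derivative (\<lambda>s. mpd f js (t(j := s))) (at (t j))"

text \<open>C(X_1,...,X_k) = i^{-k} d^k/(dt_1...dt_k) log E exp(i sum t_j X_j) at t = 0
  (principal logarithm; the value is real, we take its real part).\<close>
definition cumulant :: "'a measure \<Rightarrow> ('a \<Rightarrow> real) list \<Rightarrow> real" where
  "cumulant M Xs = Re (inverse (\<i> ^ length Xs) *
      mpd (\<lambda>t. Ln (char_fun M Xs t)) [0..<length Xs] (\<lambda>_. 0))"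

definition Part :: "nat \<Rightarrow> nat set set set" where
  "Part m = {P. partition_on {1..m} P}"

definition Part2 :: "nat \<Rightarrow> nat set set set" where
  "Part2 m = {P \<in> Part m. \<forall>A\<in>P. 2 \<le> card A}"

text \<open>Join of two partitions of S: the finest partition refined by both, i.e. the
  classes of the equivalence relation generated by "lying in a common block".\<close>
definition part_join :: "nat set \<Rightarrow> nat set set \<Rightarrow> nat set set \<Rightarrow> nat set set" where
  "part_join S P Q = S // ({(x, y). \<exists>A \<in> P \<union> Q. x \<in> A \<and> y \<in> A}\<^sup>*)"

definition Kidx :: "nat list \<Rightarrow> nat \<Rightarrow> nat" where
  "Kidx ks a = 2 * sum_list (take a ks)"

definition Pi0 :: "nat list \<Rightarrow> nat set set" where
  "Pi0 ks = {{2 * i - 1, 2 * i} | i. 1 \<le> i \<and> i \<le> sum_list ks}"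

definition Pi1 :: "nat list \<Rightarrow> nat set set" where
  "Pi1 ks = (\<Union>\<alpha>\<in>{1..length ks}.
      {{Kidx ks (\<alpha> - 1) + 2 * \<nu>, Kidx ks (\<alpha> - 1) + 2 * \<nu> + 1} | \<nu>.
          1 \<le> \<nu> \<and> \<nu> \<le> ks ! (\<alpha> - 1) - 1}
      \<union> {{Kidx ks \<alpha>, Kidx ks (\<alpha> - 1) + 1}})"

definition words :: "nat \<Rightarrow> nat \<Rightarrow> (nat \<Rightarrow> nat) set" where
  "words p m = PiE {1..m} (\<lambda>_. {1..p})"

definition measurable_wrt :: "nat set set \<Rightarrow> (nat \<Rightarrow> nat) \<Rightarrow> bool" where
  "measurable_wrt P j \<longleftrightarrow> (\<forall>A\<in>P. \<forall>x\<in>A. \<forall>y\<in>A. j x = j y)"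

definition band :: "real \<Rightarrow> nat \<Rightarrow> nat \<Rightarrow> real" where
  "band b i j = (if \<bar>real i - real j\<bar> \<le> b then 1 else 0)"

definition Bword :: "real \<Rightarrow> nat \<Rightarrow> (nat \<Rightarrow> nat) \<Rightarrow> real" where
  "Bword b k j = (\<Prod>\<alpha>\<in>{1..k}. band b (j (2 * \<alpha> - 1)) (j (2 * \<alpha>)))"

definition CPi :: "'a measure \<Rightarrow> (int \<Rightarrow> 'a \<Rightarrow> real) \<Rightarrow> nat set set \<Rightarrow> (nat \<Rightarrow> nat) \<Rightarrow> real" where
  "CPi M Z P j = (\<Prod>A\<in>P. cumulant M (map (\<lambda>i. Z (int (j i))) (sorted_list_of_set A)))"

end

theory Submission
  imports Defs
begin

text \<open>Pin one letter of a word to a value and sum a nonnegative weight over all words of a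
  given alphabet size: call the weight rooted-summable if these sums are bounded uniformly
  in the alphabet size and the pinned value, and if the contribution of the words whose letters
  spread over more than b tends to 0 as b \<rightarrow> \<infinity>. By stationarity the absolute cumulant of a
  block of \<Pi> depends only on the offsets of its letters, so absolute summability of cumulants
  makes it rooted-summable; the indicator of constant words on a block of \<Pi>1 is trivially so.
  Weights on two blocks sharing a letter glue to a rooted-summable product, and since
  \<Pi>1 \<or> \<Pi> has one block, all blocks of \<Pi>1 and \<Pi> glue to a weight F on {1..2k} that equals
  |C_\<Pi>| on \<Pi>1-measurable words. A word with B(j) \<noteq> 1 has spread larger than b, so summing
  over the p values of the first letter bounds the sum by p times the rooted tail of F,
  which vanishes as b \<rightarrow> \<infinity>.\<close>

section \<open>Rooted sums of word weights\<close>

definition words_on :: "'i set \<Rightarrow> nat \<Rightarrow> ('i \<Rightarrow> nat) set" where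
  "words_on W p = PiE W (\<lambda>_. {1..p})"

definition spread_gt :: "'i set \<Rightarrow> real \<Rightarrow> ('i \<Rightarrow> nat) \<Rightarrow> bool" where
  "spread_gt W b j \<longleftrightarrow> (\<exists>x\<in>W. \<exists>y\<in>W. b < \<bar>real (j x) - real (j y)\<bar>)"

text \<open>The bound must not depend on the alphabet size p: this translation-invariant form of
  absolute summability is what survives gluing two blocks along a common letter.\<close>
definition rooted_sum_le ::
    "'i set \<Rightarrow> (('i \<Rightarrow> nat) \<Rightarrow> real) \<Rightarrow> (('i \<Rightarrow> nat) \<Rightarrow> bool) \<Rightarrow> real \<Rightarrow> bool" where
  "rooted_sum_le W F P K \<longleftrightarrow>
     0 \<le> K \<and> (\<forall>p r c. r \<in> W \<longrightarrow> (\<Sum>j\<in>{j \<in> words_on W p. j r = c \<and> P j}. F j) \<le> K)"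

definition rooted_decay :: "'i set \<Rightarrow> (('i \<Rightarrow> nat) \<Rightarrow> real) \<Rightarrow> bool" where
  "rooted_decay W F \<longleftrightarrow> (\<exists>K. rooted_sum_le W F (\<lambda>_. True) K) \<and>
     (\<forall>\<epsilon>>0. \<exists>B. \<forall>b\<ge>B. rooted_sum_le W F (spread_gt W b) \<epsilon>)"

lemma finite_words_on: "finite W \<Longrightarrow> finite (words_on W p)"
  unfolding words_on_def by (intro finite_PiE) auto

lemma words_on_extensional: "j \<in> words_on W p \<Longrightarrow> j \<in> extensional W"
  unfolding words_on_def by (simp add: PiE_def)

lemma spread_gt_restrict [simp]: "spread_gt W b (restrict j W) \<longleftrightarrow> spread_gt W b j"
  unfolding spread_gt_def by auto

lemma rooted_sum_leD:
  "rooted_sum_le W F P K \<Longrightarrow> r \<in> W \<Longrightarrow> (\<Sum>j\<in>{j \<in> words_on W p. j r = c \<and> P j}. F j) \<le> K"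
  unfolding rooted_sum_le_def by blast

lemma rooted_sum_le_nonneg: "rooted_sum_le W F P K \<Longrightarrow> 0 \<le> K"
  unfolding rooted_sum_le_def by blast

lemma rooted_sum_le_mono: "rooted_sum_le W F P K \<Longrightarrow> K \<le> K' \<Longrightarrow> rooted_sum_le W F P K'"
  unfolding rooted_sum_le_def by (meson order_trans)

lemma rooted_sum_le_disj:
  assumes "finite W" "\<And>j. 0 \<le> F j" "\<And>j. R j \<Longrightarrow> P j \<or> Q j"
    and "rooted_sum_le W F P K1" "rooted_sum_le W F Q K2"
  shows "rooted_sum_le W F R (K1 + K2)"
  unfolding rooted_sum_le_def
proof (intro conjI allI impI)
  show "0 \<le> K1 + K2" using assms(4,5) by (simp add: rooted_sum_le_nonneg)
  fix p r c assume r: "r \<in> W"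
  let ?T = "\<lambda>P. {j \<in> words_on W p. j r = c \<and> P j}"
  have fin: "finite (?T P)" "finite (?T Q)" using finite_words_on[OF assms(1)] by auto
  have "(\<Sum>j\<in>?T R. F j) \<le> (\<Sum>j\<in>?T P \<union> ?T Q. F j)"
    using fin assms(2,3) by (intro sum_mono2) auto
  also have "\<dots> \<le> (\<Sum>j\<in>?T P. F j) + (\<Sum>j\<in>?T Q. F j)"
    using sum_Un[OF fin, of F] sum_nonneg[of "?T P \<inter> ?T Q" F, OF assms(2)] by linarith
  also have "\<dots> \<le> K1 + K2"
    using rooted_sum_leD[OF assms(4) r] rooted_sum_leD[OF assms(5) r] by (rule add_mono)
  finally show "(\<Sum>j\<in>?T R. F j) \<le> K1 + K2" .
qed

lemma rooted_decay_cong: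
  assumes "\<And>j. j \<in> extensional W \<Longrightarrow> F j = F' j"
  shows "rooted_decay W F \<longleftrightarrow> rooted_decay W F'"
proof -
  have "(\<Sum>j\<in>{j \<in> words_on W p. j r = c \<and> P j}. F j) = (\<Sum>j\<in>{j \<in> words_on W p. j r = c \<and> P j}. F' j)"
    for p r c P
    using assms words_on_extensional by (intro sum.cong) auto
  then have "rooted_sum_le W F P = rooted_sum_le W F' P" for P
    unfolding rooted_sum_le_def by presburger
  then show ?thesis unfolding rooted_decay_def by simp
qed

lemma rooted_sum_le_glue_root:
  assumes fin: "finite W" "finite A" and u: "u \<in> W" "u \<in> A" and r: "r \<in> W"
    and F_nonneg: "\<And>j. 0 \<le> F j" and G_nonneg: "\<And>j. 0 \<le> G j"
    and F: "rooted_sum_le W F P K1" and G: "rooted_sum_le A G Q K2"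
  shows "(\<Sum>j\<in>{j \<in> words_on (W \<union> A) p. j r = c \<and> P (restrict j W) \<and> Q (restrict j A)}.
            F (restrict j W) * G (restrict j A)) \<le> K1 * K2"
proof -
  define T where "T = {j \<in> words_on (W \<union> A) p. j r = c \<and> P (restrict j W) \<and> Q (restrict j A)}"
  define T1 where "T1 = {j1 \<in> words_on W p. j1 r = c \<and> P j1}"
  have finT: "finite T" unfolding T_def using finite_words_on[of "W \<union> A" p] fin by auto
  have finT1: "finite T1" unfolding T1_def using finite_words_on[of W p] fin by auto
  have restrict_T: "(\<lambda>j. restrict j W) ` T \<subseteq> T1"
    unfolding T_def T1_def words_on_def using r by (auto simp: PiE_def Pi_def)
  have fibre: "(\<Sum>j\<in>{j \<in> T. restrict j W = j1}. G (restrict j A)) \<le> K2" if "j1 \<in> T1" for j1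
  proof -
    let ?T' = "{j \<in> T. restrict j W = j1}"
    have inj: "inj_on (\<lambda>j. restrict j A) ?T'"
    proof (rule inj_onI)
      fix x y assume x: "x \<in> ?T'" and y: "y \<in> ?T'" and eq: "restrict x A = restrict y A"
      have "x \<in> extensional (W \<union> A)" "y \<in> extensional (W \<union> A)"
        using x y words_on_extensional unfolding T_def by auto
      moreover have "x z = y z" if "z \<in> W \<union> A" for z
        using that x y eq by (metis (mono_tags, lifting) UnE mem_Collect_eq restrict_apply')
      ultimately show "x = y" by (rule extensionalityI)
    qed
    have image: "(\<lambda>j. restrict j A) ` ?T' \<subseteq> {j' \<in> words_on A p. j' u = j1 u \<and> Q j'}"
      using u unfolding T_def words_on_def by (auto simp: PiE_def Pi_def)
    have "(\<Sum>j\<in>?T'. G (restrict j A)) = (\<Sum>j'\<in>(\<lambda>j. restrict j A) ` ?T'. G j')"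
      by (rule sum.reindex[OF inj, symmetric, unfolded comp_def])
    also have "\<dots> \<le> (\<Sum>j'\<in>{j' \<in> words_on A p. j' u = j1 u \<and> Q j'}. G j')"
      using image finite_words_on[OF fin(2), of p] G_nonneg by (intro sum_mono2) auto
    also have "\<dots> \<le> K2" using rooted_sum_leD[OF G u(2)] .
    finally show ?thesis .
  qed
  have "(\<Sum>j\<in>T. F (restrict j W) * G (restrict j A))
      = (\<Sum>j1\<in>T1. F j1 * (\<Sum>j\<in>{j \<in> T. restrict j W = j1}. G (restrict j A)))"
    by (subst sum.group[OF finT finT1 restrict_T, symmetric]) (auto simp: sum_distrib_left)
  also have "\<dots> \<le> (\<Sum>j1\<in>T1. F j1 * K2)"
    by (intro sum_mono mult_left_mono fibre F_nonneg)
  also have "\<dots> \<le> K1 * K2"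
    using rooted_sum_leD[OF F r, of p c] rooted_sum_le_nonneg[OF G]
    unfolding T1_def sum_distrib_right[symmetric] by (intro mult_right_mono)
  finally show ?thesis unfolding T_def .
qed

lemma rooted_sum_le_glue:
  assumes "finite W" "finite A" "u \<in> W" "u \<in> A" "\<And>j. 0 \<le> F j" "\<And>j. 0 \<le> G j"
    and "rooted_sum_le W F P K1" "rooted_sum_le A G Q K2"
  shows "rooted_sum_le (W \<union> A) (\<lambda>j. F (restrict j W) * G (restrict j A))
           (\<lambda>j. P (restrict j W) \<and> Q (restrict j A)) (K1 * K2)"
  unfolding rooted_sum_le_def
proof (intro conjI allI impI)
  show "0 \<le> K1 * K2" using assms(7,8) by (simp add: rooted_sum_le_nonneg)
  fix p r c assume "r \<in> W \<union> A"
  then consider "r \<in> W" | "r \<in> A" by blast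
  then show "(\<Sum>j\<in>{j \<in> words_on (W \<union> A) p. j r = c \<and> P (restrict j W) \<and> Q (restrict j A)}.
            F (restrict j W) * G (restrict j A)) \<le> K1 * K2"
  proof cases
    case 1
    then show ?thesis using rooted_sum_le_glue_root[OF assms(1-4) _ assms(5-8)] by blast
  next
    case 2
    then show ?thesis
      using rooted_sum_le_glue_root[OF assms(2,1,4,3) _ assms(6,5,8,7)]
      by (simp add: Un_commute conj_commute mult.commute)
  qed
qed

text \<open>A word within spread b/2 on both W and A is within b/2 of its letter at u everywhere.\<close>
lemma spread_gt_Un:
  assumes "u \<in> W" "u \<in> A" "spread_gt (W \<union> A) b j"
  shows "spread_gt W (b / 2) j \<or> spread_gt A (b / 2) j"
proof (rule ccontr)
  assume "\<not> ?thesis"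
  then have near: "\<bar>real (j x) - real (j y)\<bar> \<le> b / 2"
    if "x \<in> W \<and> y \<in> W \<or> x \<in> A \<and> y \<in> A" for x y
    using that unfolding spread_gt_def by (auto simp: not_less)
  obtain x y where "x \<in> W \<union> A" "y \<in> W \<union> A" "b < \<bar>real (j x) - real (j y)\<bar>"
    using assms(3) unfolding spread_gt_def by blast
  moreover have "\<bar>real (j x) - real (j u)\<bar> \<le> b / 2"
    using \<open>x \<in> W \<union> A\<close> assms(1,2) near by blast
  moreover have "\<bar>real (j u) - real (j y)\<bar> \<le> b / 2"
    using \<open>y \<in> W \<union> A\<close> assms(1,2) near by blast
  ultimately show False by linarith
qed

lemma rooted_sum_le_glue_spread_gt:
  assumes fin: "finite W" "finite A" and u: "u \<in> W" "u \<in> A"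
    and F_nonneg: "\<And>j. 0 \<le> F j" and G_nonneg: "\<And>j. 0 \<le> G j"
    and F: "rooted_sum_le W F (\<lambda>_. True) K1" "rooted_sum_le W F (spread_gt W (b / 2)) \<epsilon>1"
    and G: "rooted_sum_le A G (\<lambda>_. True) K2" "rooted_sum_le A G (spread_gt A (b / 2)) \<epsilon>2"
  shows "rooted_sum_le (W \<union> A) (\<lambda>j. F (restrict j W) * G (restrict j A))
           (spread_gt (W \<union> A) b) (\<epsilon>1 * K2 + K1 * \<epsilon>2)"
proof (rule rooted_sum_le_disj)
  note glue = rooted_sum_le_glue[OF fin u F_nonneg G_nonneg]
  show "rooted_sum_le (W \<union> A) (\<lambda>j. F (restrict j W) * G (restrict j A))
      (\<lambda>j. spread_gt W (b / 2) (restrict j W) \<and> True) (\<epsilon>1 * K2)"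
    using glue[OF F(2) G(1)] by simp
  show "rooted_sum_le (W \<union> A) (\<lambda>j. F (restrict j W) * G (restrict j A))
      (\<lambda>j. True \<and> spread_gt A (b / 2) (restrict j A)) (K1 * \<epsilon>2)"
    using glue[OF F(1) G(2)] by simp
  show "finite (W \<union> A)" using fin by simp
  show "0 \<le> F (restrict j W) * G (restrict j A)" for j
    using F_nonneg G_nonneg by (rule mult_nonneg_nonneg)
  show "(spread_gt W (b / 2) (restrict j W) \<and> True) \<or> (True \<and> spread_gt A (b / 2) (restrict j A))"
    if "spread_gt (W \<union> A) b j" for j
    using spread_gt_Un[OF u that] by simp
qed

lemma rooted_decay_glue:
  assumes fin: "finite W" "finite A" and u: "u \<in> W" "u \<in> A"
    and F_nonneg: "\<And>j. 0 \<le> F j" and G_nonneg: "\<And>j. 0 \<le> G j"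
    and F: "rooted_decay W F" and G: "rooted_decay A G"
  shows "rooted_decay (W \<union> A) (\<lambda>j. F (restrict j W) * G (restrict j A))"
proof -
  obtain K1 where K1: "rooted_sum_le W F (\<lambda>_. True) K1" using F unfolding rooted_decay_def by blast
  obtain K2 where K2: "rooted_sum_le A G (\<lambda>_. True) K2" using G unfolding rooted_decay_def by blast
  have "K1 \<ge> 0" "K2 \<ge> 0" using K1 K2 by (simp_all add: rooted_sum_le_nonneg)
  have "\<exists>B. \<forall>b\<ge>B. rooted_sum_le (W \<union> A) (\<lambda>j. F (restrict j W) * G (restrict j A))
            (spread_gt (W \<union> A) b) \<epsilon>" if "\<epsilon> > 0" for \<epsilon>
  proof -
    define \<epsilon>1 where "\<epsilon>1 = \<epsilon> / (2 * (K2 + 1))"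
    define \<epsilon>2 where "\<epsilon>2 = \<epsilon> / (2 * (K1 + 1))"
    have "\<epsilon>1 > 0" "\<epsilon>2 > 0" using \<open>\<epsilon> > 0\<close> \<open>K1 \<ge> 0\<close> \<open>K2 \<ge> 0\<close> by (simp_all add: \<epsilon>1_def \<epsilon>2_def)
    then obtain B1 B2 where
      B1: "\<And>b. b \<ge> B1 \<Longrightarrow> rooted_sum_le W F (spread_gt W b) \<epsilon>1" and
      B2: "\<And>b. b \<ge> B2 \<Longrightarrow> rooted_sum_le A G (spread_gt A b) \<epsilon>2"
      using F G unfolding rooted_decay_def by meson
    have "\<epsilon>1 * K2 + K1 * \<epsilon>2 \<le> \<epsilon> / 2 + \<epsilon> / 2"
      using \<open>\<epsilon> > 0\<close> \<open>K1 \<ge> 0\<close> \<open>K2 \<ge> 0\<close>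
      by (intro add_mono) (simp_all add: \<epsilon>1_def \<epsilon>2_def field_simps)
    then have "\<epsilon>1 * K2 + K1 * \<epsilon>2 \<le> \<epsilon>" by simp
    then have "rooted_sum_le (W \<union> A) (\<lambda>j. F (restrict j W) * G (restrict j A)) (spread_gt (W \<union> A) b) \<epsilon>"
      if "2 * max B1 B2 \<le> b" for b
      using that by (intro rooted_sum_le_mono[OF rooted_sum_le_glue_spread_gt[OF fin u F_nonneg G_nonneg
            K1 B1 K2 B2]]) simp_all
    then show ?thesis by blast
  qed
  then show ?thesis
    unfolding rooted_decay_def using rooted_sum_le_glue[OF fin u F_nonneg G_nonneg K1 K2] by auto
qed

section \<open>Gluing along a connected family of blocks\<close>

inductive overlap_chain :: "'i set set \<Rightarrow> 'i set \<Rightarrow> 'i set set \<Rightarrow> bool" for E where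
  single: "A \<in> E \<Longrightarrow> A \<noteq> {} \<Longrightarrow> overlap_chain E A {A}"
| insert: "overlap_chain E W D \<Longrightarrow> A \<in> E \<Longrightarrow> A \<inter> W \<noteq> {} \<Longrightarrow> overlap_chain E (W \<union> A) (insert A D)"

lemma overlap_chainD: "overlap_chain E W D \<Longrightarrow> D \<subseteq> E \<and> finite D \<and> W = \<Union>D \<and> W \<noteq> {}"
  by (induction rule: overlap_chain.induct) auto

lemma rooted_decay_overlap_chain:
  assumes chain: "overlap_chain E W D" and fin: "\<And>A. A \<in> E \<Longrightarrow> finite A"
    and nonneg: "\<And>A j. 0 \<le> g A j" and decay: "\<And>A. A \<in> E \<Longrightarrow> rooted_decay A (g A)"
  shows "rooted_decay W (\<lambda>j. \<Prod>A\<in>D. g A (restrict j A))"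
  using chain
proof (induction rule: overlap_chain.induct)
  case (single A)
  have "rooted_decay A (\<lambda>j. g A (restrict j A))"
    using rooted_decay_cong[of A "g A" "\<lambda>j. g A (restrict j A)"] decay[OF single(1)]
    by (metis extensional_restrict)
  moreover have "(\<lambda>j. \<Prod>A'\<in>{A}. g A' (restrict j A')) = (\<lambda>j. g A (restrict j A))" by simp
  ultimately show ?case by (simp only:)
next
  case (insert W D A)
  have D: "D \<subseteq> E" "W = \<Union>D" "finite D" using overlap_chainD[OF insert.hyps(1)] by auto
  then have "finite W" using fin by blast
  show ?case
  proof (cases "A \<in> D")
    case True
    then show ?thesis using insert.IH D by (simp add: Un_absorb2 Union_upper insert_absorb)
  next
    case False
    define F where "F j = (\<Prod>A\<in>D. g A (restrict j A))" for j
    have "(\<Prod>A'\<in>insert A D. g A' (restrict j A')) = F (restrict j W) * g A (restrict j A)" for j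
    proof -
      have "g A' (restrict (restrict j W) A') = g A' (restrict j A')" if "A' \<in> D" for A'
        using that D(2) by (metis Sup_upper inf.absorb_iff2 restrict_restrict)
      then show ?thesis
        unfolding F_def using False \<open>finite D\<close> by (simp add: mult.commute)
    qed
    moreover obtain u where "u \<in> W" "u \<in> A" using insert.hyps(3) by blast
    then have "rooted_decay (W \<union> A) (\<lambda>j. F (restrict j W) * g A (restrict j A))"
      using insert.IH nonneg unfolding F_def[abs_def]
      by (intro rooted_decay_glue[OF \<open>finite W\<close> fin[OF insert.hyps(2)]] decay[OF insert.hyps(2)])
        (simp_all add: prod_nonneg)
    ultimately show ?thesis by (simp only:)
  qed
qed

lemma overlap_chain_absorb:
  assumes "overlap_chain E W D" "finite D'" "D' \<subseteq> E" "\<And>A. A \<in> D' \<Longrightarrow> A \<noteq> {} \<and> A \<subseteq> W"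
  shows "overlap_chain E W (D \<union> D')"
  using assms(2-4)
proof (induction D' rule: finite_induct)
  case empty
  then show ?case using assms(1) by simp
next
  case (insert A D')
  then have "overlap_chain E (W \<union> A) (insert A (D \<union> D'))"
    by (intro overlap_chain.insert) auto
  moreover have "W \<union> A = W" using insert by auto
  ultimately show ?case by simp
qed

lemma overlap_rtrancl_crosses:
  assumes "(x, y) \<in> {(x, y). \<exists>A\<in>E. x \<in> A \<and> y \<in> A}\<^sup>*" "x \<in> W" "y \<notin> W"
  shows "\<exists>A\<in>E. A \<inter> W \<noteq> {} \<and> \<not> A \<subseteq> W"
proof (rule ccontr)
  assume "\<not> ?thesis"
  then have closed: "A \<subseteq> W" if "A \<in> E" "A \<inter> W \<noteq> {}" for A
    using that by blast
  from assms(1) have "y \<in> W"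
    by (induction rule: rtrancl_induct) (use assms(2) closed in blast)+
  with assms(3) show False by contradiction
qed

lemma overlap_chain_if_connected:
  assumes fin: "finite S" and S: "S \<noteq> {}" "\<Union>E = S" "{} \<notin> E"
    and conn: "\<And>x y. x \<in> S \<Longrightarrow> y \<in> S \<Longrightarrow> (x, y) \<in> {(x, y). \<exists>A\<in>E. x \<in> A \<and> y \<in> A}\<^sup>*"
  shows "overlap_chain E S E"
proof -
  have grow: "overlap_chain E S E" if "overlap_chain E W D" for W D
    using that
  proof (induction "card (S - W)" arbitrary: W D rule: less_induct)
    case less
    have "W \<subseteq> S" using overlap_chainD[OF less.prems] S(2) by blast
    show ?case
    proof (cases "W = S")
      case True
      have "finite E" using fin S(2) by (metis Pow_iff Sup_le_iff finite_Pow_iff finite_subset subsetI)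
      then have "overlap_chain E S (D \<union> E)"
        using overlap_chain_absorb[OF less.prems[unfolded True]] S by blast
      moreover have "D \<union> E = E" using overlap_chainD[OF less.prems] by blast
      ultimately show ?thesis by simp
    next
      case False
      then obtain x y where xy: "x \<in> W" "y \<in> S" "y \<notin> W"
        using \<open>W \<subseteq> S\<close> overlap_chainD[OF less.prems] by blast
      then obtain A where A: "A \<in> E" "A \<inter> W \<noteq> {}" "\<not> A \<subseteq> W"
        using overlap_rtrancl_crosses[OF conn[of x y] xy(1,3)] \<open>W \<subseteq> S\<close> by blast
      have "card (S - (W \<union> A)) < card (S - W)"
        using A S(2) fin by (intro psubset_card_mono) auto
      then show ?thesis
        using less.hyps overlap_chain.insert[OF less.prems A(1,2)] by blast
    qed
  qed
  obtain A where "A \<in> E" using S by blast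
  then show ?thesis using grow[OF overlap_chain.single] S(3) by blast
qed

lemma rtrancl_if_card_quotient_eq_1:
  assumes "card (S // R\<^sup>*) = 1" "x \<in> S" "y \<in> S"
  shows "(x, y) \<in> R\<^sup>*"
proof -
  obtain C where "S // R\<^sup>* = {C}" using assms(1) card_1_singletonE by blast
  then have "R\<^sup>* `` {x} = R\<^sup>* `` {y}" using assms(2,3) by (metis quotientI singletonD)
  then show ?thesis by blast
qed

lemma rooted_decay_prod_connected:
  assumes fin: "finite S" and E: "\<Union>E = S" "{} \<notin> E"
    and conn: "card (S // {(x, y). \<exists>A\<in>E. x \<in> A \<and> y \<in> A}\<^sup>*) = 1"
    and nonneg: "\<And>A j. 0 \<le> g A j" and decay: "\<And>A. A \<in> E \<Longrightarrow> rooted_decay A (g A)"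
  shows "rooted_decay S (\<lambda>j. \<Prod>A\<in>E. g A (restrict j A))"
proof (rule rooted_decay_overlap_chain[OF overlap_chain_if_connected[OF fin _ E] _ nonneg decay])
  show "S \<noteq> {}" using conn by auto
  show "(x, y) \<in> {(x, y). \<exists>A\<in>E. x \<in> A \<and> y \<in> A}\<^sup>*" if "x \<in> S" "y \<in> S" for x y
    using rtrancl_if_card_quotient_eq_1[OF conn that] .
  show "finite A" if "A \<in> E" for A
    using that E(1) fin by (meson Union_upper finite_subset)
qed

lemma sum_spread_gt_small_o:
  fixes b :: "nat \<Rightarrow> real"
  assumes fin: "finite S" and "S \<noteq> {}" and decay: "rooted_decay S F" and nonneg: "\<And>j. 0 \<le> F j"
    and b: "filterlim b at_top at_top"
  shows "(\<lambda>p. \<Sum>j\<in>{j \<in> words_on S p. spread_gt S (b p) j}. F j) \<in> o(\<lambda>p. real p)"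
proof (rule landau_o.smallI)
  fix \<epsilon> :: real assume "\<epsilon> > 0"
  obtain r where "r \<in> S" using \<open>S \<noteq> {}\<close> by blast
  obtain B where B: "\<And>b'. b' \<ge> B \<Longrightarrow> rooted_sum_le S F (spread_gt S b') \<epsilon>"
    using decay \<open>\<epsilon> > 0\<close> unfolding rooted_decay_def by blast
  have "eventually (\<lambda>p. B \<le> b p) sequentially" using b by (simp add: filterlim_at_top)
  then show "eventually (\<lambda>p. norm (\<Sum>j\<in>{j \<in> words_on S p. spread_gt S (b p) j}. F j) \<le> \<epsilon> * norm (real p)) sequentially"
  proof eventually_elim
    case (elim p)
    let ?T = "{j \<in> words_on S p. spread_gt S (b p) j}"
    have "finite ?T" using finite_words_on[OF fin] by simp
    have "(\<Sum>j\<in>?T. F j) = (\<Sum>c\<in>{1..p}. \<Sum>j\<in>{j \<in> ?T. j r = c}. F j)"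
      using \<open>finite ?T\<close> \<open>r \<in> S\<close>
      by (intro sum.group[symmetric]) (auto simp: words_on_def PiE_def Pi_def)
    also have "\<dots> \<le> (\<Sum>c\<in>{1..p}. \<epsilon>)"
    proof (intro sum_mono)
      fix c
      have "{j \<in> ?T. j r = c} = {j \<in> words_on S p. j r = c \<and> spread_gt S (b p) j}" by auto
      then show "(\<Sum>j\<in>{j \<in> ?T. j r = c}. F j) \<le> \<epsilon>"
        using rooted_sum_leD[OF B[OF elim] \<open>r \<in> S\<close>] by simp
    qed
    moreover have "0 \<le> (\<Sum>j\<in>?T. F j)" by (intro sum_nonneg nonneg)
    ultimately show ?case by (simp add: mult.commute)
  qed
qed

section \<open>Block weights\<close>

definition constant_indicator :: "'i set \<Rightarrow> ('i \<Rightarrow> nat) \<Rightarrow> real" where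
  "constant_indicator B j = (if \<forall>x\<in>B. \<forall>y\<in>B. j x = j y then 1 else 0)"

lemma rooted_decay_constant_indicator:
  assumes "finite B"
  shows "rooted_decay B (constant_indicator B)"
proof -
  have "rooted_sum_le B (constant_indicator B) (\<lambda>_. True) 1"
    unfolding rooted_sum_le_def
  proof (intro conjI allI impI)
    fix p r c assume "r \<in> B"
    let ?T = "{j \<in> words_on B p. j r = c \<and> True}"
    have "constant_indicator B j = 0" if j: "j \<in> ?T" and not_const: "j \<noteq> restrict (\<lambda>_. c) B" for j
    proof -
      obtain x where x: "j x \<noteq> restrict (\<lambda>_. c) B x" using not_const by blast
      have "j \<in> extensional B" using j words_on_extensional by blast
      then have "x \<in> B" "j x \<noteq> j r" using x j by (auto simp: extensional_def split: if_splits)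
      then show ?thesis using \<open>r \<in> B\<close> by (auto simp: constant_indicator_def)
    qed
    then have "(\<Sum>j\<in>?T. constant_indicator B j) = (\<Sum>j\<in>?T \<inter> {restrict (\<lambda>_. c) B}. constant_indicator B j)"
      using finite_words_on[OF assms] by (intro sum.mono_neutral_right) auto
    also have "\<dots> \<le> 1" by (cases "restrict (\<lambda>_. c) B \<in> ?T") (auto simp: constant_indicator_def)
    finally show "(\<Sum>j\<in>?T. constant_indicator B j) \<le> 1" .
  qed simp
  moreover have "rooted_sum_le B (constant_indicator B) (spread_gt B b) \<epsilon>" if "b \<ge> 0" "\<epsilon> > 0" for b \<epsilon>
  proof -
    have "constant_indicator B j = 0" if "spread_gt B b j" for j
      using that \<open>b \<ge> 0\<close> by (force simp: constant_indicator_def spread_gt_def)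
    then show ?thesis using \<open>\<epsilon> > 0\<close> by (simp add: rooted_sum_le_def)
  qed
  ultimately show ?thesis unfolding rooted_decay_def by blast
qed

lemma summable_on_small_outside_finite:
  fixes f :: "'a \<Rightarrow> real"
  assumes "f summable_on X" "\<And>x. x \<in> X \<Longrightarrow> 0 \<le> f x" "\<epsilon> > 0"
  obtains F0 where "finite F0" "\<And>F. finite F \<Longrightarrow> F \<subseteq> X - F0 \<Longrightarrow> sum f F \<le> \<epsilon>"
proof -
  obtain F0 where F0: "finite F0" "F0 \<subseteq> X" "dist (sum f F0) (infsum f X) \<le> \<epsilon>"
    using has_sum_finite_approximation[OF has_sum_infsum[OF assms(1)] assms(3)] by blast
  have "sum f F \<le> \<epsilon>" if "finite F" "F \<subseteq> X - F0" for F
  proof -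
    have "sum f F + sum f F0 = sum f (F \<union> F0)"
      using that F0 by (intro sum.union_disjoint[symmetric]) auto
    also have "\<dots> \<le> infsum f X"
      using that F0 assms(2) by (intro finite_sum_le_infsum[OF assms(1)]) auto
    finally show ?thesis using F0(3) by (simp add: dist_real_def)
  qed
  with F0(1) show ?thesis using that by blast
qed

definition offsets :: "'i list \<Rightarrow> ('i \<Rightarrow> nat) \<Rightarrow> int list" where
  "offsets L j = map (\<lambda>i. int (j i) - int (j (hd L))) (tl L)"

lemma length_offsets [simp]: "length (offsets L j) = length L - 1"
  unfolding offsets_def by simp

lemma offsets_eqD:
  assumes "offsets L j = offsets L j'" "x \<in> set L"
  shows "int (j x) - int (j (hd L)) = int (j' x) - int (j' (hd L))"
proof (cases L)
  case (Cons a L')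
  then show ?thesis using assms unfolding offsets_def by (auto simp: map_eq_conv)
qed (use assms in simp)

lemma inj_on_offsets:
  assumes "set L = A" "r \<in> A"
  shows "inj_on (offsets L) {j \<in> words_on A p. j r = c}"
proof (rule inj_onI)
  fix j j' assume j: "j \<in> {j \<in> words_on A p. j r = c}" and j': "j' \<in> {j \<in> words_on A p. j r = c}"
    and eq: "offsets L j = offsets L j'"
  have "j x = j' x" if "x \<in> A" for x
    using offsets_eqD[OF eq, of x] offsets_eqD[OF eq, of r] that assms j j' by auto
  then show "j = j'"
    using j j' words_on_extensional by (blast intro: extensionalityI)
qed

lemma sum_offsets_reindex:
  assumes "set L = A" "r \<in> A" "T \<subseteq> {j \<in> words_on A p. j r = c}"
  shows "(\<Sum>j\<in>T. f (offsets L j)) = sum f (offsets L ` T)"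
  by (simp add: sum.reindex[OF inj_on_subset[OF inj_on_offsets[OF assms(1,2)] assms(3)]])

lemma not_spread_gt_if_offsets_bounded:
  fixes R :: int and b :: real
  assumes "set L = A" "\<And>e. e \<in> set (offsets L j) \<Longrightarrow> \<bar>e\<bar> \<le> R" "0 \<le> R" "2 * of_int R \<le> b"
  shows "\<not> spread_gt A b j"
proof -
  have near: "\<bar>real (j x) - real (j (hd L))\<bar> \<le> R" if "x \<in> A" for x
  proof (cases "x \<in> set (tl L)")
    case True
    then have "\<bar>int (j x) - int (j (hd L))\<bar> \<le> R" using assms(2) unfolding offsets_def by auto
    then show ?thesis by linarith
  next
    case False
    then have "x = hd L" using that assms(1) by (cases L) auto
    then show ?thesis using assms(3) by simp
  qed
  have "\<bar>real (j x) - real (j y)\<bar> \<le> b" if "x \<in> A" "y \<in> A" for x y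
    using near[OF that(1)] near[OF that(2)] assms(4) by linarith
  then show ?thesis unfolding spread_gt_def by (auto simp: not_less)
qed

lemma rooted_sum_le_offsets:
  assumes L: "set L = A" "finite A"
    and f_nonneg: "\<And>xs. 0 \<le> f xs" and f: "f summable_on {xs. length xs = length L - 1}"
  shows "rooted_sum_le A (\<lambda>j. f (offsets L j)) P (infsum f {xs. length xs = length L - 1})"
  unfolding rooted_sum_le_def
proof (intro conjI allI impI)
  show "0 \<le> infsum f {xs. length xs = length L - 1}" by (intro infsum_nonneg f_nonneg)
  fix p r c assume "r \<in> A"
  let ?T = "{j \<in> words_on A p. j r = c \<and> P j}"
  have "(\<Sum>j\<in>?T. f (offsets L j)) = sum f (offsets L ` ?T)"
    by (rule sum_offsets_reindex[OF L(1) \<open>r \<in> A\<close>, where p = p and c = c]) blast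
  also have "\<dots> \<le> infsum f {xs. length xs = length L - 1}"
    using finite_words_on[OF L(2)] by (intro finite_sum_le_infsum[OF f] f_nonneg) auto
  finally show "(\<Sum>j\<in>?T. f (offsets L j)) \<le> infsum f {xs. length xs = length L - 1}" .
qed

text \<open>Words whose offsets avoid a finite set F0 of offset lists carry little mass, and a word
  whose offsets lie in F0 has spread at most twice the largest entry of F0.\<close>
lemma rooted_tail_offsets:
  assumes L: "set L = A" "finite A"
    and f_nonneg: "\<And>xs. 0 \<le> f xs" and f: "f summable_on {xs. length xs = length L - 1}"
    and "\<epsilon> > 0"
  obtains B where "\<And>b. b \<ge> B \<Longrightarrow> rooted_sum_le A (\<lambda>j. f (offsets L j)) (spread_gt A b) \<epsilon>"
proof -
  let ?X = "{xs. length xs = length L - 1}"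
  obtain F0 where "finite F0" and F0: "\<And>F. finite F \<Longrightarrow> F \<subseteq> ?X - F0 \<Longrightarrow> sum f F \<le> \<epsilon>"
    using summable_on_small_outside_finite[OF f f_nonneg \<open>\<epsilon> > 0\<close>] by blast
  define R where "R = Max (insert 0 (abs ` \<Union>(set ` F0)))"
  have "0 \<le> R" and R: "\<And>xs e. xs \<in> F0 \<Longrightarrow> e \<in> set xs \<Longrightarrow> \<bar>e\<bar> \<le> R"
    unfolding R_def using \<open>finite F0\<close> by (auto intro: Max_ge)
  have "rooted_sum_le A (\<lambda>j. f (offsets L j)) (spread_gt A b) \<epsilon>" if "2 * of_int R \<le> b" for b
    unfolding rooted_sum_le_def
  proof (intro conjI allI impI)
    fix p r c assume "r \<in> A"
    let ?T = "{j \<in> words_on A p. j r = c \<and> spread_gt A b j}"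
    have "offsets L j \<notin> F0" if "j \<in> ?T" for j
      using not_spread_gt_if_offsets_bounded[OF L(1) R \<open>0 \<le> R\<close>] \<open>2 * of_int R \<le> b\<close> that by auto
    moreover have "finite ?T" using finite_words_on[OF L(2)] by simp
    moreover have "(\<Sum>j\<in>?T. f (offsets L j)) = sum f (offsets L ` ?T)"
      by (rule sum_offsets_reindex[OF L(1) \<open>r \<in> A\<close>, where p = p and c = c]) blast
    ultimately show "(\<Sum>j\<in>?T. f (offsets L j)) \<le> \<epsilon>"
      by (simp add: F0 image_subset_iff)
  qed (use \<open>\<epsilon> > 0\<close> in simp)
  then show ?thesis using that by blast
qed

lemma rooted_decay_offsets:
  assumes "set L = A" "finite A"
    and "\<And>xs. 0 \<le> f xs" "f summable_on {xs. length xs = length L - 1}"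
  shows "rooted_decay A (\<lambda>j. f (offsets L j))"
  unfolding rooted_decay_def
  using rooted_sum_le_offsets[OF assms] rooted_tail_offsets[OF assms] by meson

lemma char_fun_eq_if_joint_distr_eq:
  fixes Xs Ys :: "('a \<Rightarrow> real) list"
  assumes len: "length Ys = length Xs"
    and meas: "\<And>i. i < length Xs \<Longrightarrow> Xs ! i \<in> borel_measurable M" "\<And>i. i < length Xs \<Longrightarrow> Ys ! i \<in> borel_measurable M"
    and distr_eq: "distr M (PiM {..<length Xs} (\<lambda>_. borel)) (\<lambda>x. \<lambda>i\<in>{..<length Xs}. (Xs ! i) x)
         = distr M (PiM {..<length Xs} (\<lambda>_. borel)) (\<lambda>x. \<lambda>i\<in>{..<length Xs}. (Ys ! i) x)"
  shows "char_fun M Xs = char_fun M Ys"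
proof
  fix t :: "nat \<Rightarrow> real"
  define n where "n = length Xs"
  define \<Phi> where "\<Phi> y = cis (\<Sum>i<n. t i * y i)" for y :: "nat \<Rightarrow> real"
  have [measurable]: "cis \<in> borel_measurable borel"
    by (intro borel_measurable_continuous_onI continuous_intros)
  have \<Phi>: "\<Phi> \<in> borel_measurable (PiM {..<n} (\<lambda>_. borel))"
    unfolding \<Phi>_def by measurable
  have vec: "(\<lambda>x. \<lambda>i\<in>{..<n}. (Vs ! i) x) \<in> measurable M (PiM {..<n} (\<lambda>_. borel))"
    if "\<And>i. i < n \<Longrightarrow> Vs ! i \<in> borel_measurable M" for Vs :: "('a \<Rightarrow> real) list"
    using that by (intro measurable_restrict) auto
  have char_fun_distr: "char_fun M Vs t
      = integral\<^sup>L (distr M (PiM {..<n} (\<lambda>_. borel)) (\<lambda>x. \<lambda>i\<in>{..<n}. (Vs ! i) x)) \<Phi>"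
    if "length Vs = n" "\<And>i. i < n \<Longrightarrow> Vs ! i \<in> borel_measurable M" for Vs
  proof -
    have "char_fun M Vs t = integral\<^sup>L M (\<lambda>x. \<Phi> (\<lambda>i\<in>{..<n}. (Vs ! i) x))"
      unfolding char_fun_def \<Phi>_def that(1) by (intro Bochner_Integration.integral_cong) auto
    then show ?thesis by (simp add: integral_distr[OF vec[OF that(2)] \<Phi>])
  qed
  show "char_fun M Xs t = char_fun M Ys t"
    using char_fun_distr[of Xs] char_fun_distr[of Ys] distr_eq meas len by (simp add: n_def)
qed

lemma cumulant_eq_if_joint_distr_eq:
  fixes Xs Ys :: "('a \<Rightarrow> real) list"
  assumes "length Ys = length Xs"
    and "\<And>i. i < length Xs \<Longrightarrow> Xs ! i \<in> borel_measurable M" "\<And>i. i < length Xs \<Longrightarrow> Ys ! i \<in> borel_measurable M"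
    and "distr M (PiM {..<length Xs} (\<lambda>_. borel)) (\<lambda>x. \<lambda>i\<in>{..<length Xs}. (Xs ! i) x)
         = distr M (PiM {..<length Xs} (\<lambda>_. borel)) (\<lambda>x. \<lambda>i\<in>{..<length Xs}. (Ys ! i) x)"
  shows "cumulant M Xs = cumulant M Ys"
  using char_fun_eq_if_joint_distr_eq[OF assms] assms(1) unfolding cumulant_def by simp

lemma cumulant_shift:
  fixes Z :: "int \<Rightarrow> 'a \<Rightarrow> real"
  assumes meas: "\<And>j. Z j \<in> borel_measurable M"
    and stationary: "\<And>(h::int) (js::int list).
           distr M (PiM {..<length js} (\<lambda>_. borel)) (\<lambda>x. \<lambda>i\<in>{..<length js}. Z (js ! i + h) x)
         = distr M (PiM {..<length js} (\<lambda>_. borel)) (\<lambda>x. \<lambda>i\<in>{..<length js}. Z (js ! i) x)"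
  shows "cumulant M (map (\<lambda>w. Z (w + h)) ws) = cumulant M (map Z ws)"
proof (rule cumulant_eq_if_joint_distr_eq)
  have "(\<lambda>x. \<lambda>i\<in>{..<length ws}. (map (\<lambda>w. Z (w + h)) ws ! i) x) = (\<lambda>x. \<lambda>i\<in>{..<length ws}. Z (ws ! i + h) x)"
    "(\<lambda>x. \<lambda>i\<in>{..<length ws}. (map Z ws ! i) x) = (\<lambda>x. \<lambda>i\<in>{..<length ws}. Z (ws ! i) x)"
    by (auto intro!: restrict_ext)
  then show "distr M (PiM {..<length (map (\<lambda>w. Z (w + h)) ws)} (\<lambda>_. borel))
      (\<lambda>x. \<lambda>i\<in>{..<length (map (\<lambda>w. Z (w + h)) ws)}. (map (\<lambda>w. Z (w + h)) ws ! i) x)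
    = distr M (PiM {..<length (map (\<lambda>w. Z (w + h)) ws)} (\<lambda>_. borel))
      (\<lambda>x. \<lambda>i\<in>{..<length (map (\<lambda>w. Z (w + h)) ws)}. (map Z ws ! i) x)"
    using stationary[of ws h] by simp
qed (use meas in simp_all)

lemma cumulant_word_eq_offsets:
  fixes Z :: "int \<Rightarrow> 'a \<Rightarrow> real"
  assumes meas: "\<And>j. Z j \<in> borel_measurable M"
    and stationary: "\<And>(h::int) (js::int list).
           distr M (PiM {..<length js} (\<lambda>_. borel)) (\<lambda>x. \<lambda>i\<in>{..<length js}. Z (js ! i + h) x)
         = distr M (PiM {..<length js} (\<lambda>_. borel)) (\<lambda>x. \<lambda>i\<in>{..<length js}. Z (js ! i) x)"
    and "L \<noteq> []"
  shows "cumulant M (map (\<lambda>i. Z (int (j i))) L) = cumulant M (Z 0 # map Z (offsets L j))"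
proof -
  have "map (\<lambda>i. Z (int (j i))) L = map (\<lambda>w. Z (w + int (j (hd L)))) (0 # offsets L j)"
    using \<open>L \<noteq> []\<close> by (cases L) (simp_all add: offsets_def)
  also have "cumulant M \<dots> = cumulant M (map Z (0 # offsets L j))"
    by (rule cumulant_shift[OF meas stationary])
  finally show ?thesis by simp
qed

lemma rooted_decay_abs_cumulant_block:
  fixes Z :: "int \<Rightarrow> 'a \<Rightarrow> real"
  assumes meas: "\<And>j. Z j \<in> borel_measurable M"
    and stationary: "\<And>(h::int) (js::int list).
           distr M (PiM {..<length js} (\<lambda>_. borel)) (\<lambda>x. \<lambda>i\<in>{..<length js}. Z (js ! i + h) x)
         = distr M (PiM {..<length js} (\<lambda>_. borel)) (\<lambda>x. \<lambda>i\<in>{..<length js}. Z (js ! i) x)"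
    and summable: "(\<lambda>js. \<bar>cumulant M (Z 0 # map Z js)\<bar>) summable_on {js. length js = card A - 1}"
    and "finite A" "A \<noteq> {}"
  shows "rooted_decay A (\<lambda>j. \<bar>cumulant M (map (\<lambda>i. Z (int (j i))) (sorted_list_of_set A))\<bar>)"
proof -
  define L where "L = sorted_list_of_set A"
  have L: "set L = A" "length L = card A" "L \<noteq> []"
    using \<open>finite A\<close> \<open>A \<noteq> {}\<close> by (simp_all add: L_def)
  have "rooted_decay A (\<lambda>j. \<bar>cumulant M (Z 0 # map Z (offsets L j))\<bar>)"
    by (rule rooted_decay_offsets[OF L(1) \<open>finite A\<close>]) (use summable L(2) in simp_all)
  then show ?thesis
    unfolding L_def[symmetric] cumulant_word_eq_offsets[OF meas stationary L(3)] .
qed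

section \<open>Band-limited sums of cumulant products\<close>

lemma words_eq_words_on: "words p m = words_on {1..m} p"
  unfolding words_def words_on_def ..

lemma Pi1_blocks:
  assumes "\<forall>x\<in>set ks. 1 \<le> x" "A \<in> Pi1 ks"
  shows "A \<noteq> {} \<and> A \<subseteq> {1..2 * sum_list ks}"
proof -
  obtain \<alpha> where \<alpha>: "\<alpha> \<in> {1..length ks}" and
    A: "A \<in> {{Kidx ks (\<alpha> - 1) + 2 * \<nu>, Kidx ks (\<alpha> - 1) + 2 * \<nu> + 1} | \<nu>.
           1 \<le> \<nu> \<and> \<nu> \<le> ks ! (\<alpha> - 1) - 1} \<union> {{Kidx ks \<alpha>, Kidx ks (\<alpha> - 1) + 1}}"
    using assms(2) unfolding Pi1_def by blast
  then obtain a where a: "a < length ks" "\<alpha> = Suc a" by (cases \<alpha>) auto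
  have "Kidx ks (Suc a) = Kidx ks a + 2 * ks ! a"
    using a unfolding Kidx_def by (simp add: take_Suc_conv_app_nth)
  moreover have "Kidx ks (Suc a) \<le> 2 * sum_list ks"
    unfolding Kidx_def by (metis append_take_drop_id le_add1 mult_le_mono2 sum_list_append)
  moreover have "1 \<le> ks ! a" using assms(1) a by simp
  ultimately show ?thesis using A unfolding a(2) by auto
qed

lemma abs_one_minus_Bword_le:
  "\<bar>1 - Bword b k j\<bar> \<le> (if spread_gt {1..2 * k} b j then 1 else 0)"
proof (cases "\<forall>\<alpha>\<in>{1..k}. band b (j (2 * \<alpha> - 1)) (j (2 * \<alpha>)) = 1")
  case True
  then show ?thesis unfolding Bword_def by simp
next
  case False
  then obtain \<alpha> where \<alpha>: "\<alpha> \<in> {1..k}" "band b (j (2 * \<alpha> - 1)) (j (2 * \<alpha>)) = 0"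
    unfolding band_def by (auto split: if_splits)
  then have "Bword b k j = 0" unfolding Bword_def by (intro prod_zero) auto
  moreover have "spread_gt {1..2 * k} b j"
    unfolding spread_gt_def using \<alpha> by (intro bexI[of _ "2 * \<alpha> - 1"] bexI[of _ "2 * \<alpha>"]) (auto simp: band_def split: if_splits)
  ultimately show ?thesis by simp
qed

text \<open>On a block of P1 the weight is the indicator of constant words: it is 1 on P1-measurable
  words, yet rooted-summable, so the blocks of P1 can link the blocks of \<Pi>.\<close>
definition block_weight ::
    "'a measure \<Rightarrow> (int \<Rightarrow> 'a \<Rightarrow> real) \<Rightarrow> nat set set \<Rightarrow> nat set \<Rightarrow> (nat \<Rightarrow> nat) \<Rightarrow> real" where
  "block_weight M Z Pp A j = (if A \<in> Pp then \<bar>cumulant M (map (\<lambda>i. Z (int (j i))) (sorted_list_of_set A))\<bar>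
                             else constant_indicator A j)"

lemma block_weight_nonneg: "0 \<le> block_weight M Z Pp A j"
  by (simp add: block_weight_def constant_indicator_def)

lemma rooted_decay_block_weight:
  fixes Z :: "int \<Rightarrow> 'a \<Rightarrow> real"
  assumes meas: "\<And>j. Z j \<in> borel_measurable M"
    and stationary: "\<And>(h::int) (js::int list).
           distr M (PiM {..<length js} (\<lambda>_. borel)) (\<lambda>x. \<lambda>i\<in>{..<length js}. Z (js ! i + h) x)
         = distr M (PiM {..<length js} (\<lambda>_. borel)) (\<lambda>x. \<lambda>i\<in>{..<length js}. Z (js ! i) x)"
    and summable: "\<And>r. r \<ge> 1 \<Longrightarrow>
           (\<lambda>js. \<bar>cumulant M (Z 0 # map Z js)\<bar>) summable_on {js :: int list. length js = r}"
    and "finite A" and "A \<in> Pp \<Longrightarrow> 2 \<le> card A"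
  shows "rooted_decay A (block_weight M Z Pp A)"
proof (cases "A \<in> Pp")
  case True
  then have "rooted_decay A (\<lambda>j. \<bar>cumulant M (map (\<lambda>i. Z (int (j i))) (sorted_list_of_set A))\<bar>)"
    using assms(4,5) by (intro rooted_decay_abs_cumulant_block[OF meas stationary summable]) auto
  then show ?thesis using True by (simp add: block_weight_def[abs_def])
next
  case False
  then show ?thesis
    using rooted_decay_constant_indicator[OF \<open>finite A\<close>] by (simp add: block_weight_def[abs_def])
qed

lemma prod_block_weight_eq_abs_CPi:
  assumes "finite P1" "\<And>A. A \<in> Pp \<Longrightarrow> finite A" "finite Pp" "measurable_wrt P1 j"
  shows "(\<Prod>A\<in>P1 \<union> Pp. block_weight M Z Pp A (restrict j A)) = \<bar>CPi M Z Pp j\<bar>"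
proof -
  have "(\<Prod>A\<in>P1 \<union> Pp. block_weight M Z Pp A (restrict j A)) = (\<Prod>A\<in>Pp. block_weight M Z Pp A (restrict j A))"
  proof (rule prod.mono_neutral_right)
    show "\<forall>A\<in>P1 \<union> Pp - Pp. block_weight M Z Pp A (restrict j A) = 1"
      using \<open>measurable_wrt P1 j\<close> by (auto simp: block_weight_def constant_indicator_def measurable_wrt_def)
  qed (use assms(1,3) in auto)
  also have "\<dots> = (\<Prod>A\<in>Pp. \<bar>cumulant M (map (\<lambda>i. Z (int (j i))) (sorted_list_of_set A))\<bar>)"
    using assms(2)
    by (intro prod.cong refl) (auto simp: block_weight_def intro!: map_cong arg_cong[where f = "\<lambda>L. \<bar>cumulant M L\<bar>"])
  also have "\<dots> = \<bar>CPi M Z Pp j\<bar>" by (simp add: CPi_def abs_prod)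
  finally show ?thesis .
qed

lemma rooted_decay_abs_CPi:
  fixes Z :: "int \<Rightarrow> 'a \<Rightarrow> real"
  assumes meas: "\<And>j. Z j \<in> borel_measurable M"
    and stationary: "\<And>(h::int) (js::int list).
           distr M (PiM {..<length js} (\<lambda>_. borel)) (\<lambda>x. \<lambda>i\<in>{..<length js}. Z (js ! i + h) x)
         = distr M (PiM {..<length js} (\<lambda>_. borel)) (\<lambda>x. \<lambda>i\<in>{..<length js}. Z (js ! i) x)"
    and summable: "\<And>r. r \<ge> 1 \<Longrightarrow>
           (\<lambda>js. \<bar>cumulant M (Z 0 # map Z js)\<bar>) summable_on {js :: int list. length js = r}"
    and Pp: "Pp \<in> Part2 m" and P1: "\<And>A. A \<in> P1 \<Longrightarrow> A \<noteq> {} \<and> A \<subseteq> {1..m}"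
    and conn: "card (part_join {1..m} P1 Pp) = 1"
  obtains F where "rooted_decay {1..m} F" "\<And>j. 0 \<le> F j"
    "\<And>j. measurable_wrt P1 j \<Longrightarrow> F j = \<bar>CPi M Z Pp j\<bar>"
proof
  have Pp_blocks: "\<Union>Pp = {1..m}" "\<And>A. A \<in> Pp \<Longrightarrow> A \<noteq> {} \<and> 2 \<le> card A"
    using Pp unfolding Part2_def Part_def partition_on_def by auto
  have "P1 \<union> Pp \<subseteq> Pow {1..m}" using P1 Pp_blocks(1) by blast
  then have fin: "finite P1" "finite Pp" "\<And>A. A \<in> P1 \<union> Pp \<Longrightarrow> finite A"
    by (auto intro: finite_subset)
  define F where "F j = (\<Prod>A\<in>P1 \<union> Pp. block_weight M Z Pp A (restrict j A))" for j
  show "rooted_decay {1..m} F"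
    unfolding F_def
  proof (rule rooted_decay_prod_connected)
    show "\<Union>(P1 \<union> Pp) = {1..m}" using Pp_blocks(1) P1 by blast
    show "{} \<notin> P1 \<union> Pp" using Pp_blocks(2) P1 by blast
    show "card ({1..m} // {(x, y). \<exists>A\<in>P1 \<union> Pp. x \<in> A \<and> y \<in> A}\<^sup>*) = 1"
      using conn unfolding part_join_def .
    show "rooted_decay A (block_weight M Z Pp A)" if "A \<in> P1 \<union> Pp" for A
      using that fin(3) Pp_blocks(2) by (intro rooted_decay_block_weight[OF meas stationary summable]) auto
  qed (simp_all add: block_weight_nonneg)
  show "0 \<le> F j" for j unfolding F_def by (intro prod_nonneg block_weight_nonneg)
  show "F j = \<bar>CPi M Z Pp j\<bar>" if "measurable_wrt P1 j" for j
    unfolding F_def using fin that by (intro prod_block_weight_eq_abs_CPi) auto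
qed

lemma sum_one_minus_Bword_bigo:
  fixes b :: "nat \<Rightarrow> real"
  assumes J: "\<And>p. J p \<subseteq> words p (2 * k)"
    and F_nonneg: "\<And>j. 0 \<le> F j" and C: "\<And>p j. j \<in> J p \<Longrightarrow> \<bar>C j\<bar> = F j"
  shows "(\<lambda>p. \<Sum>j\<in>J p. (1 - Bword (b p) k j) * C j)
       \<in> O(\<lambda>p. \<Sum>j\<in>{j \<in> words_on {1..2 * k} p. spread_gt {1..2 * k} (b p) j}. F j)"
proof (intro bigoI[where c = 1] always_eventually allI)
  fix p
  let ?S = "{1..2 * k}" and ?W = "words_on {1..2 * k} p"
  have fin: "finite ?W" by (simp add: finite_words_on)
  have "\<bar>\<Sum>j\<in>J p. (1 - Bword (b p) k j) * C j\<bar> \<le> (\<Sum>j\<in>J p. \<bar>1 - Bword (b p) k j\<bar> * \<bar>C j\<bar>)"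
    by (metis (no_types, lifting) abs_mult sum.cong sum_abs)
  also have "\<dots> \<le> (\<Sum>j\<in>J p. if spread_gt ?S (b p) j then F j else 0)"
  proof (intro sum_mono)
    fix j assume "j \<in> J p"
    then show "\<bar>1 - Bword (b p) k j\<bar> * \<bar>C j\<bar> \<le> (if spread_gt ?S (b p) j then F j else 0)"
      using abs_one_minus_Bword_le[of "b p" k j] F_nonneg[of j] C[of j p]
      by (auto intro: mult_left_le_one_le)
  qed
  also have "\<dots> \<le> (\<Sum>j\<in>?W. if spread_gt ?S (b p) j then F j else 0)"
    using J F_nonneg fin by (intro sum_mono2) (auto simp: words_eq_words_on)
  also have "\<dots> = (\<Sum>j\<in>{j \<in> ?W. spread_gt ?S (b p) j}. F j)"
    using fin by (simp add: sum.inter_filter)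
  also have "\<dots> = norm (\<Sum>j\<in>{j \<in> ?W. spread_gt ?S (b p) j}. F j)"
    using F_nonneg by (simp add: sum_nonneg)
  finally show "norm (\<Sum>j\<in>J p. (1 - Bword (b p) k j) * C j)
      \<le> 1 * norm (\<Sum>j\<in>{j \<in> ?W. spread_gt ?S (b p) j}. F j)" by simp
qed

theorem proposition6p3:
  fixes M :: "'a measure" and Z :: "int \<Rightarrow> 'a \<Rightarrow> real"
    and b :: "nat \<Rightarrow> real" and n :: "nat \<Rightarrow> nat"
    and ks :: "nat list" and Pp :: "nat set set"
  assumes "prob_space M"
    and "\<And>j. Z j \<in> borel_measurable M"
    and "\<And>j m. integrable M (\<lambda>x. \<bar>Z j x\<bar> ^ m)"
    and "integral\<^sup>L M (Z 0) = 0"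
    and "\<And>(h::int) (js::int list).
           distr M (PiM {..<length js} (\<lambda>_. borel)) (\<lambda>x. \<lambda>i\<in>{..<length js}. Z (js ! i + h) x)
         = distr M (PiM {..<length js} (\<lambda>_. borel)) (\<lambda>x. \<lambda>i\<in>{..<length js}. Z (js ! i) x)"
    and "\<And>r. r \<ge> 1 \<Longrightarrow>
           (\<lambda>js. \<bar>cumulant M (Z 0 # map Z js)\<bar>) summable_on {js :: int list. length js = r}"
    and "\<And>p. p \<ge> 1 \<Longrightarrow> 0 < b p \<and> b p \<le> real p \<and> 0 < n p"
    and "filterlim b at_top at_top"
    and "filterlim n at_top at_top"
    and "(\<lambda>p. b p / real (n p)) \<longlonglongrightarrow> 0"
    and "ks \<noteq> []" and "\<forall>x\<in>set ks. 1 \<le> x"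
    and "Pp \<in> Part2 (2 * sum_list ks)"
    and "card (part_join {1..2 * sum_list ks}
                (part_join {1..2 * sum_list ks} (Pi0 ks) (Pi1 ks)) Pp) = 1"
    and "card (part_join {1..2 * sum_list ks} (Pi1 ks) Pp) = 1"
  shows "(\<lambda>p. \<Sum>j\<in>{j \<in> words p (2 * sum_list ks). measurable_wrt (Pi1 ks) j}.
             (1 - Bword (b p) (sum_list ks) j) * CPi M Z Pp j) \<in> o(\<lambda>p. real p)"
proof -
  define k where "k = sum_list ks"
  obtain F where decay: "rooted_decay {1..2 * k} F" and F_nonneg: "\<And>j. 0 \<le> F j"
    and F_eq: "\<And>j. measurable_wrt (Pi1 ks) j \<Longrightarrow> F j = \<bar>CPi M Z Pp j\<bar>"
    using rooted_decay_abs_CPi[OF assms(2,5,6,13)] Pi1_blocks[OF assms(12)] assms(15)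
    unfolding k_def by metis
  have "{1..2 * k} \<noteq> {}"
    using assms(15) unfolding k_def part_join_def by (metis card.empty quotient_empty zero_neq_one)
  then have small: "(\<lambda>p. \<Sum>j\<in>{j \<in> words_on {1..2 * k} p. spread_gt {1..2 * k} (b p) j}. F j)
      \<in> o(\<lambda>p. real p)"
    by (intro sum_spread_gt_small_o[OF _ _ decay F_nonneg assms(8)]) simp
  have "(\<lambda>p. \<Sum>j\<in>{j \<in> words p (2 * k). measurable_wrt (Pi1 ks) j}. (1 - Bword (b p) k j) * CPi M Z Pp j)
      \<in> O(\<lambda>p. \<Sum>j\<in>{j \<in> words_on {1..2 * k} p. spread_gt {1..2 * k} (b p) j}. F j)"
    by (rule sum_one_minus_Bword_bigo) (use F_nonneg F_eq in auto)
  then show ?thesis unfolding k_def[symmetric] using small by (rule landau_o.big_small_trans)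
qed

end
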